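(* Let $0\le\lambda_2\le1$ and let $\theta:[0,1]\to[0,1]$ be non-increasing with $\theta(t)=0$ for $t\in(\lambda_2,1]$ and $\theta(\lambda_2)>0$. Define, for $q\in(0,1]$, $$g(q)=\int_{\theta^{-1}(q)}^1\int_0^t\frac1t\cdot\frac{\min\{\theta(s),q\}^t}{q}\,\mathrm ds\,\mathrm dt,$$ where $\theta^{-1}(x)=\inf\{t\in[0,1]:\theta(t)<x\}$ (with $\inf\emptyset=1$) and $0^t=0$ for $t>0$. Then $g(q)\ge g(\theta(\lambda_2))$ for every $q\in(0,\theta(\lambda_2)]$. *)

theory Defs
  imports "HOL-Analysis.Analysis"
begin

definition theta_inv :: "(real \<Rightarrow> real) \<Rightarrow> real \<Rightarrow> real" where
  "theta_inv \<theta> x = (if {t\<in>{0..1}. \<theta> t < x} = {} then 1 else Inf {t\<in>{0..1}. \<theta> t < x})"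

definition g_fun :: "(real \<Rightarrow> real) \<Rightarrow> real \<Rightarrow> real" where
  "g_fun \<theta> q = integral {theta_inv \<theta> q..1}
     (\<lambda>t. integral {0..t} (\<lambda>s. (1 / t) * (min (\<theta> s) q powr t) / q))"

end

theory Submission
  imports Defs
begin

text \<open>For \<open>0 < q \<le> \<theta> \<lambda>\<^sub>2\<close> monotonicity gives \<open>\<theta> \<ge> q\<close> on \<open>[0, \<lambda>\<^sub>2]\<close>, while \<open>\<theta> = 0 < q\<close>
  on \<open>(\<lambda>\<^sub>2, 1]\<close>. Hence \<open>\<theta>\<^sup>-\<^sup>1 q = \<lambda>\<^sub>2\<close>, and the inner integrand is \<open>q powr (t - 1) / t\<close>
  on \<open>[0, \<lambda>\<^sub>2]\<close> and \<open>0\<close> beyond, so \<open>g q = \<lambda>\<^sub>2 \<cdot> \<integral>\<^sub>\<lambda>\<^sub>2\<^sup>1 q powr (t - 1) / t dt\<close>, which is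
  non-increasing in \<open>q\<close> because \<open>t - 1 \<le> 0\<close>.\<close>

lemma theta_inv_threshold:
  fixes \<theta> :: "real \<Rightarrow> real" and lam x :: real
  assumes "0 \<le> lam" "lam \<le> 1"
    and "\<forall>s\<in>{0..lam}. x \<le> \<theta> s" and "\<forall>s\<in>{lam<..1}. \<theta> s < x"
  shows "theta_inv \<theta> x = lam"
proof -
  have "lam < t" if "0 \<le> t" "\<theta> t < x" for t
    using assms(3) that by (meson atLeastAtMost_iff not_le)
  then have "{t\<in>{0..1}. \<theta> t < x} = {lam<..1}"
    using assms by auto
  then show ?thesis
    unfolding theta_inv_def using assms(2) by (cases "lam < 1") auto
qed

lemma integral_min_powr_threshold:
  fixes \<theta> :: "real \<Rightarrow> real" and lam t q :: real
  assumes "0 \<le> lam" "lam \<le> t" "0 < q"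
    and "\<forall>s\<in>{0..lam}. q \<le> \<theta> s" and "\<forall>s\<in>{lam<..t}. \<theta> s = 0"
  shows "integral {0..t} (\<lambda>s. (1 / t) * (min (\<theta> s) q powr t) / q)
    = lam * (q powr (t - 1) / t)"
proof -
  define c where "c = q powr (t - 1) / t"
  have "((\<lambda>s. c) has_integral lam * c) {0..lam}"
    using has_integral_const_real[of c 0 lam] assms(1) by simp
  then have "((\<lambda>s. if s \<in> {0..lam} then c else 0) has_integral lam * c) {0..t}"
    using has_integral_restrict_closed_subinterval[of "\<lambda>s. c" "lam * c" 0 lam 0 t] assms(2)
    by simp
  moreover have "(if s \<in> {0..lam} then c else 0) = (1 / t) * (min (\<theta> s) q powr t) / q"
    if "s \<in> {0..t}" for s
  proof (cases "s \<le> lam")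
    case True
    then have "min (\<theta> s) q = q" using assms(4) that by auto
    then show ?thesis
      using True that assms(3) by (simp add: c_def powr_diff mult.commute)
  next
    case False
    then show ?thesis using assms(3,5) that by auto
  qed
  ultimately have "((\<lambda>s. (1 / t) * (min (\<theta> s) q powr t) / q) has_integral lam * c) {0..t}"
    by (rule has_integral_eq[rotated]) simp
  then show ?thesis
    unfolding c_def by (rule integral_unique)
qed

lemma g_fun_threshold:
  fixes \<theta> :: "real \<Rightarrow> real" and lam q :: real
  assumes "0 \<le> lam" "lam \<le> 1" "0 < q"
    and "\<forall>s\<in>{0..lam}. q \<le> \<theta> s" and "\<forall>s\<in>{lam<..1}. \<theta> s = 0"
  shows "g_fun \<theta> q = lam * integral {lam..1} (\<lambda>t. q powr (t - 1) / t)"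
proof -
  have "theta_inv \<theta> q = lam"
    using assms by (intro theta_inv_threshold) auto
  then have "g_fun \<theta> q = integral {lam..1}
      (\<lambda>t. integral {0..t} (\<lambda>s. (1 / t) * (min (\<theta> s) q powr t) / q))"
    unfolding g_fun_def by simp
  also have "\<dots> = integral {lam..1} (\<lambda>t. lam * (q powr (t - 1) / t))"
    using assms by (intro integral_cong integral_min_powr_threshold) auto
  finally show ?thesis by (simp only: integral_mult_right)
qed

lemma integral_powr_div_antimono:
  fixes a b q Q :: real
  assumes "0 < a" "b \<le> 1" "0 < q" "q \<le> Q"
  shows "integral {a..b} (\<lambda>t. Q powr (t - 1) / t) \<le> integral {a..b} (\<lambda>t. q powr (t - 1) / t)"
proof (rule integral_le)
  have "(\<lambda>t. x powr (t - 1) / t) integrable_on {a..b}" if "0 < x" for x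
    using assms(1) that by (intro integrable_continuous_interval continuous_intros) auto
  then show "(\<lambda>t. Q powr (t - 1) / t) integrable_on {a..b}"
    and "(\<lambda>t. q powr (t - 1) / t) integrable_on {a..b}"
    using assms(3,4) by auto
  show "Q powr (t - 1) / t \<le> q powr (t - 1) / t" if "t \<in> {a..b}" for t
    using that assms powr_mono2'[of "t - 1" q Q] by (auto intro: divide_right_mono)
qed

theorem mainTheorem12:
  fixes \<theta> :: "real \<Rightarrow> real" and lam2 q :: real
  assumes "0 \<le> lam2" and "lam2 \<le> 1"
    and "\<forall>t\<in>{0..1}. \<theta> t \<in> {0..1}"
    and "\<forall>s t. 0 \<le> s \<longrightarrow> s \<le> t \<longrightarrow> t \<le> 1 \<longrightarrow> \<theta> t \<le> \<theta> s"
    and "\<forall>t. lam2 < t \<longrightarrow> t \<le> 1 \<longrightarrow> \<theta> t = 0"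
    and "\<theta> lam2 > 0"
    and "0 < q" and "q \<le> \<theta> lam2"
  shows "g_fun \<theta> q \<ge> g_fun \<theta> (\<theta> lam2)"
proof -
  have g_eq: "g_fun \<theta> x = lam2 * integral {lam2..1} (\<lambda>t. x powr (t - 1) / t)"
    if "0 < x" "x \<le> \<theta> lam2" for x
  proof (rule g_fun_threshold)
    show "\<forall>s\<in>{0..lam2}. x \<le> \<theta> s"
      using assms(2,4) that(2) by (auto intro: order_trans)
  qed (use assms that in auto)
  show ?thesis
  proof (cases "lam2 = 0")
    case True
    then show ?thesis using g_eq assms(6-8) by simp
  next
    case False
    then have "0 < lam2" using assms(1) by simp
    then show ?thesis
      using g_eq[of q] g_eq[of "\<theta> lam2"] assms(1,6-8)
        integral_powr_div_antimono[of lam2 1 q "\<theta> lam2"]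
      by (simp add: mult_left_mono)
  qed
qed

end
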